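(* Let $A \in \mathbb{R}^{m\times n}$ be semimonotone, i.e. $A^{\dagger}\geq 0$, and let $A=U-V$ be a proper weak regular splitting of type II of $A$. Suppose that $\rho(U^{\dagger}V)>0$. Then there exists a vector $x\in\mathbb{R}^n$ with $x\geq 0$, $x\neq 0$, such that $U^{\dagger}Vx=\rho(U^{\dagger}V)x$, $Ax\geq 0$ with $Ax\neq 0$, and $Vx\geq 0$ with $Vx\neq 0$.
   Context: $A^{\dagger}$ denotes the Moore–Penrose inverse and $\rho(\cdot)$ the spectral radius. Inequalities between matrices/vectors are entrywise. A splitting $A=U-V$ (with $U,V$ of the same size as $A$) is proper if $R(U)=R(A)$ and $N(U)=N(A)$ (range and null space). A proper splitting $A=U-V$ is a proper weak regular splitting of type II if $U^{\dagger}\geq 0$ and $VU^{\dagger}\geq 0$. *)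

theory Defs
  imports "HOL-Analysis.Analysis"
begin

definition nonneg_mat :: "real^'n^'m \<Rightarrow> bool" where
  "nonneg_mat A \<longleftrightarrow> (\<forall>i j. 0 \<le> A $ i $ j)"

definition nonneg_vec :: "real^'n \<Rightarrow> bool" where
  "nonneg_vec x \<longleftrightarrow> (\<forall>i. 0 \<le> x $ i)"

definition moore_penrose :: "real^'n^'m \<Rightarrow> real^'m^'n" where
  "moore_penrose A = (THE X. A ** X ** A = A \<and> X ** A ** X = X \<and>
      transpose (A ** X) = A ** X \<and> transpose (X ** A) = X ** A)"

definition complexify :: "real^'n^'m \<Rightarrow> complex^'n^'m" where
  "complexify A = (\<chi> i j. complex_of_real (A $ i $ j))"

definition spectral_radius :: "real^'n^'n \<Rightarrow> real" where
  "spectral_radius A = Max {cmod z | z. \<exists>v. v \<noteq> 0 \<and> complexify A *v v = z *s v}"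

definition mat_range :: "real^'n^'m \<Rightarrow> (real^'m) set" where
  "mat_range A = range (\<lambda>x. A *v x)"

definition mat_null :: "real^'n^'m \<Rightarrow> (real^'n) set" where
  "mat_null A = {x. A *v x = 0}"

definition proper_splitting :: "real^'n^'m \<Rightarrow> real^'n^'m \<Rightarrow> real^'n^'m \<Rightarrow> bool" where
  "proper_splitting A U V \<longleftrightarrow> A = U - V \<and> mat_range U = mat_range A \<and> mat_null U = mat_null A"

definition proper_weak_regular_II :: "real^'n^'m \<Rightarrow> real^'n^'m \<Rightarrow> real^'n^'m \<Rightarrow> bool" where
  "proper_weak_regular_II A U V \<longleftrightarrow> proper_splitting A U V \<and>
     nonneg_mat (moore_penrose U) \<and> nonneg_mat (V ** moore_penrose U)"

end

theory Submission
  imports Defs "Jordan_Normal_Form.Spectral_Radius"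
begin

text \<open>
  Write \<open>\<rho>\<close> for the spectral radius of \<open>C = U\<^sup>\<dagger>V\<close> and put \<open>B = VU\<^sup>\<dagger> \<ge> 0\<close>. If \<open>Cu = \<mu>u\<close> with
  \<open>|\<mu>| = \<rho>\<close>, then \<open>Vu\<close> is an eigenvector of \<open>B\<close> for \<open>\<mu>\<close>, so its entrywise modulus \<open>w\<close> satisfies
  \<open>Bw \<ge> \<rho>w\<close>. Brouwer's fixed point theorem, applied to \<open>y \<mapsto> By / \<Sum>(By)\<close> on the compact convex
  set \<open>{y \<ge> 0. \<Sum>y = 1, By \<ge> \<rho>y}\<close>, gives \<open>y \<ge> 0\<close>, \<open>y \<noteq> 0\<close> with \<open>By = sy\<close> and \<open>s \<ge> \<rho>\<close>; as
  \<open>x = U\<^sup>\<dagger>y \<ge> 0\<close> is then an eigenvector of \<open>C\<close> for \<open>s\<close>, in fact \<open>s = \<rho>\<close>.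
  The range of \<open>V = U - A\<close> lies in that of \<open>U\<close>, so \<open>Ux = y\<close> and \<open>Ax = (1 - \<rho>)y\<close>; and
  \<open>N(A) = N(U)\<close> gives \<open>A\<^sup>\<dagger>A = U\<^sup>\<dagger>U\<close>, so \<open>x = A\<^sup>\<dagger>Ax = (1 - \<rho>)A\<^sup>\<dagger>y\<close>. Since \<open>A\<^sup>\<dagger>y \<ge> 0\<close> and
  \<open>0 \<noteq> x \<ge> 0\<close>, this forces \<open>\<rho> < 1\<close>.
\<close>

no_notation scalar_prod (infix "\<bullet>" 70)
no_notation vec_index (infixl "$" 100)
hide_const (open) Matrix.mat Matrix.vec Matrix.orthogonal Spectral_Radius.spectral_radius
  VectorSpace.subspace
hide_fact (open) Matrix.orthogonal_def

section \<open>Orthogonal projections and the Moore-Penrose inverse\<close>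

lemma inner_matrix_vector_transpose:
  fixes M :: "real^'n^'m"
  shows "(M *v x) \<bullet> y = x \<bullet> (transpose M *v y)"
  by (metis dot_lmul_matrix transpose_transpose vector_transpose_matrix)

lemma symmetric_matrix_iff_self_adjoint:
  fixes M :: "real^'n^'n"
  shows "transpose M = M \<longleftrightarrow> (\<forall>x y. (M *v x) \<bullet> y = x \<bullet> (M *v y))"
  unfolding inner_matrix_vector_transpose
  by (metis matrix_eq vector_eq_ldot)

lemma orthogonal_projection_exists:
  fixes S :: "'a::euclidean_space set"
  assumes S: "subspace S"
  obtains p where "linear p" "\<And>x. p x \<in> S" "\<And>x w. w \<in> S \<Longrightarrow> (x - p x) \<bullet> w = 0"
proof -
  have "\<exists>y. y \<in> S \<and> (\<forall>w\<in>S. (x - y) \<bullet> w = 0)" for x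
    using orthogonal_subspace_decomp_exists[of S x] span_eq_iff[of S] S
    by (metis add_diff_cancel_left' orthogonal_def)
  then obtain p where p_in: "\<And>x. p x \<in> S" and p_orth: "\<And>x w. w \<in> S \<Longrightarrow> (x - p x) \<bullet> w = 0"
    by metis
  have p_eqI: "p x = y" if y: "y \<in> S" "\<And>w. w \<in> S \<Longrightarrow> (x - y) \<bullet> w = 0" for x y
  proof -
    have "p x - y \<in> S"
      using p_in y(1) S by (metis subspace_diff)
    hence "((x - y) - (x - p x)) \<bullet> (p x - y) = 0"
      using y(2) p_orth by (simp only: inner_diff_left diff_zero)
    thus ?thesis by simp
  qed
  have "linear p"
  proof (rule linearI)
    fix x y :: 'a and c :: real
    show "p (x + y) = p x + p y"
    proof (rule p_eqI)
      show "p x + p y \<in> S" using p_in S by (metis subspace_add)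
      fix w assume "w \<in> S"
      hence "(x - p x) \<bullet> w + (y - p y) \<bullet> w = 0" by (simp only: p_orth add_0)
      thus "(x + y - (p x + p y)) \<bullet> w = 0" by (simp add: algebra_simps inner_diff_left inner_add_left)
    qed
    show "p (c *\<^sub>R x) = c *\<^sub>R p x"
    proof (rule p_eqI)
      show "c *\<^sub>R p x \<in> S" using p_in S by (metis subspace_scale)
      fix w assume "w \<in> S"
      hence "c * ((x - p x) \<bullet> w) = 0" by (simp only: p_orth mult_zero_right)
      thus "(c *\<^sub>R x - c *\<^sub>R p x) \<bullet> w = 0" by (simp add: algebra_simps inner_diff_left)
    qed
  qed
  with p_in p_orth that show ?thesis by blast
qed

lemma orthogonal_projection_matrix:
  fixes S :: "(real^'n) set"
  assumes S: "subspace S"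
  obtains P :: "real^'n^'n"
  where "\<And>x. P *v x \<in> S" "\<And>x. x \<in> S \<Longrightarrow> P *v x = x" "transpose P = P"
proof -
  obtain p where "linear p" and p_in: "\<And>x. p x \<in> S" and p_orth: "\<And>x w. w \<in> S \<Longrightarrow> (x - p x) \<bullet> w = 0"
    using orthogonal_projection_exists[OF S] by blast
  hence P: "matrix p *v x = p x" for x
    by (metis matrix_vector_mul(2))
  have "p x = x" if "x \<in> S" for x
  proof -
    have "x - p x \<in> S"
      using that p_in S by (metis subspace_diff)
    hence "(x - p x) \<bullet> (x - p x) = 0"
      by (rule p_orth)
    thus ?thesis by simp
  qed
  moreover have "transpose (matrix p) = matrix p"
  proof -
    have "(y - p y) \<bullet> p x = 0" "(x - p x) \<bullet> p y = 0" for x y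
      using p_orth p_in by blast+
    hence "y \<bullet> p x = p y \<bullet> p x" "x \<bullet> p y = p x \<bullet> p y" for x y
      by (simp_all add: inner_diff_left)
    hence "p x \<bullet> y = x \<bullet> p y" for x y
      by (metis inner_commute)
    thus ?thesis
      unfolding symmetric_matrix_iff_self_adjoint P by blast
  qed
  ultimately show ?thesis
    using that[of "matrix p"] p_in by (simp add: P)
qed

lemma row_space_projection_matrix:
  fixes A :: "real^'n^'m"
  obtains Q :: "real^'n^'n"
  where "\<And>x. A *v (Q *v x) = A *v x" "\<And>x x'. A *v x = A *v x' \<Longrightarrow> Q *v x = Q *v x'"
    "transpose Q = Q"
proof -
  obtain N where N_null: "\<And>x. N *v x \<in> {x. A *v x = 0}"
    and N_id: "\<And>x. x \<in> {x. A *v x = 0} \<Longrightarrow> N *v x = x" and N_sym: "transpose N = N"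
    using orthogonal_projection_matrix[OF linear_subspace_kernel[OF matrix_vector_mul_linear[of A]]]
    by blast
  define Q where "Q = mat 1 - N"
  have "A *v (Q *v x) = A *v x" for x
    using N_null by (simp add: Q_def matrix_vector_mult_diff_rdistrib matrix_vector_mult_diff_distrib)
  moreover have "Q *v x = Q *v x'" if "A *v x = A *v x'" for x x'
  proof -
    have "N *v (x - x') = x - x'"
      using that by (intro N_id) (simp add: matrix_vector_mult_diff_distrib)
    thus ?thesis
      by (simp add: Q_def matrix_vector_mult_diff_rdistrib matrix_vector_mult_diff_distrib algebra_simps)
  qed
  moreover have "transpose Q = Q"
  proof -
    have "N $ i $ j = N $ j $ i" for i j
      using arg_cong[OF N_sym, of "\<lambda>M. M $ j $ i"] by (simp add: transpose_def)
    thus ?thesis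
      by (simp add: Q_def transpose_def Finite_Cartesian_Product.vec_eq_iff
          Finite_Cartesian_Product.mat_def)
  qed
  ultimately show ?thesis
    using that by blast
qed

lemma penrose_equations_solvable:
  fixes A :: "real^'n^'m"
  shows "\<exists>X. A ** X ** A = A \<and> X ** A ** X = X \<and>
      transpose (A ** X) = A ** X \<and> transpose (X ** A) = X ** A"
proof -
  obtain P where P_range: "\<And>y. P *v y \<in> range ((*v) A)"
    and P_id: "\<And>y. y \<in> range ((*v) A) \<Longrightarrow> P *v y = y" and P_sym: "transpose P = P"
    using orthogonal_projection_matrix
      [OF linear_subspace_image[OF matrix_vector_mul_linear[of A] subspace_UNIV]]
    by blast
  obtain Q where AQ: "\<And>x. A *v (Q *v x) = A *v x"
    and Q_eqI: "\<And>x x'. A *v x = A *v x' \<Longrightarrow> Q *v x = Q *v x'" and Q_sym: "transpose Q = Q"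
    using row_space_projection_matrix[of A] by blast
  have "\<forall>y. \<exists>x. A *v x = P *v y"
    using P_range by (metis rangeE)
  then obtain f where f: "\<And>y. A *v f y = P *v y"
    by metis
  txt \<open>\<open>f y\<close> is some least squares solution of \<open>A x = y\<close>; projecting it onto the row space
    with \<open>Q\<close> makes it unique, hence linear in \<open>y\<close>.\<close>
  have "linear (\<lambda>y. Q *v f y)"
  proof (rule linearI)
    show "Q *v f (y + z) = Q *v f y + Q *v f z" for y z
      using Q_eqI[of "f (y + z)" "f y + f z"]
      by (simp add: f matrix_vector_right_distrib)
    show "Q *v f (c *\<^sub>R y) = c *\<^sub>R (Q *v f y)" for c y
      using Q_eqI[of "f (c *\<^sub>R y)" "c *\<^sub>R f y"]
      by (simp add: f matrix_vector_mult_scaleR)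
  qed
  then obtain X where X: "\<And>y. X *v y = Q *v f y"
    by (metis matrix_vector_mul(2))
  have AX: "A ** X = P"
    by (simp add: matrix_eq matrix_vector_mul_assoc[symmetric] X AQ f)
  have "Q *v f (A *v x) = Q *v x" for x
    by (rule Q_eqI) (simp add: f P_id)
  hence XA: "X ** A = Q"
    by (simp add: matrix_eq matrix_vector_mul_assoc[symmetric] X)
  have AXA: "A ** X ** A = A"
    by (simp add: AX matrix_eq matrix_vector_mul_assoc[symmetric] P_id)
  have "Q *v (Q *v f y) = Q *v f y" for y
    by (rule Q_eqI) (rule AQ)
  hence XAX: "X ** A ** X = X"
    by (simp add: XA matrix_eq matrix_vector_mul_assoc[symmetric] X)
  show ?thesis
    using AXA XAX AX XA P_sym Q_sym by blast
qed

lemma penrose_equations_unique: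
  fixes A :: "real^'n^'m"
  assumes X: "A ** X ** A = A" "X ** A ** X = X" "transpose (A ** X) = A ** X" "transpose (X ** A) = X ** A"
    and Y: "A ** Y ** A = A" "Y ** A ** Y = Y" "transpose (A ** Y) = A ** Y" "transpose (Y ** A) = Y ** A"
  shows "X = Y"
proof -
  have "X = X ** transpose (A ** X)"
    using X(2,3) by (simp add: matrix_mul_assoc)
  also have "\<dots> = X ** transpose (A ** Y ** A ** X)"
    using Y(1) by simp
  also have "\<dots> = X ** (transpose (A ** X) ** transpose (A ** Y))"
    by (simp add: matrix_transpose_mul matrix_mul_assoc)
  also have "\<dots> = X ** A ** X ** A ** Y"
    using X(3) Y(3) by (simp add: matrix_mul_assoc)
  finally have X_eq: "X = X ** A ** Y"
    using X(2) by simp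
  have "Y = transpose (Y ** A) ** Y"
    using Y(2,4) by simp
  also have "\<dots> = transpose (Y ** (A ** X ** A)) ** Y"
    using X(1) by simp
  also have "\<dots> = (transpose (X ** A) ** transpose (Y ** A)) ** Y"
    by (simp add: matrix_transpose_mul matrix_mul_assoc)
  also have "\<dots> = X ** A ** (Y ** A ** Y)"
    using X(4) Y(4) by (simp add: matrix_mul_assoc)
  finally have "Y = X ** A ** Y"
    using Y(2) by simp
  with X_eq show ?thesis by simp
qed

lemma moore_penrose_equations:
  fixes A :: "real^'n^'m"
  shows "A ** moore_penrose A ** A = A"
    and "moore_penrose A ** A ** moore_penrose A = moore_penrose A"
    and "transpose (A ** moore_penrose A) = A ** moore_penrose A"
    and "transpose (moore_penrose A ** A) = moore_penrose A ** A"
proof -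
  have "\<exists>!X. A ** X ** A = A \<and> X ** A ** X = X \<and>
      transpose (A ** X) = A ** X \<and> transpose (X ** A) = X ** A"
    using penrose_equations_solvable[of A] penrose_equations_unique[of A] by blast
  from theI'[OF this] show "A ** moore_penrose A ** A = A"
    and "moore_penrose A ** A ** moore_penrose A = moore_penrose A"
    and "transpose (A ** moore_penrose A) = A ** moore_penrose A"
    and "transpose (moore_penrose A ** A) = moore_penrose A ** A"
    unfolding moore_penrose_def by auto
qed

lemma mult_moore_penrose_proj_if_null_subset:
  fixes A :: "real^'n^'m" and B :: "real^'n^'k"
  assumes "mat_null A \<subseteq> mat_null B"
  shows "B ** (moore_penrose A ** A) = B"
proof -
  have "A *v (x - (moore_penrose A ** A) *v x) = 0" for x
    using moore_penrose_equations(1)[of A]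
    by (simp add: matrix_vector_mult_diff_distrib matrix_vector_mul_assoc matrix_mul_assoc)
  hence "B *v (x - (moore_penrose A ** A) *v x) = 0" for x
    using assms unfolding mat_null_def by blast
  thus ?thesis
    by (simp add: matrix_eq matrix_vector_mult_diff_distrib matrix_vector_mul_assoc[symmetric])
qed

lemma moore_penrose_proj_eq_if_null_eq:
  fixes A :: "real^'n^'m" and B :: "real^'n^'k"
  assumes "mat_null A = mat_null B"
  shows "moore_penrose A ** A = moore_penrose B ** B"
proof -
  let ?P = "moore_penrose A ** A" and ?Q = "moore_penrose B ** B"
  have "?Q ** ?P = moore_penrose B ** (B ** ?P)" and "?P ** ?Q = moore_penrose A ** (A ** ?Q)"
    by (simp_all add: matrix_mul_assoc)
  hence QP: "?Q ** ?P = ?Q" and PQ: "?P ** ?Q = ?P"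
    using mult_moore_penrose_proj_if_null_subset[of A B] mult_moore_penrose_proj_if_null_subset[of B A] assms
    by simp_all
  have "?Q = transpose (?Q ** ?P)"
    using QP moore_penrose_equations(4)[of B] by simp
  also have "\<dots> = transpose ?P ** transpose ?Q"
    by (rule matrix_transpose_mul)
  also have "\<dots> = ?P"
    using PQ by (simp only: moore_penrose_equations(4))
  finally show ?thesis by simp
qed

lemma mult_moore_penrose_range:
  fixes A :: "real^'n^'m"
  assumes "y \<in> mat_range A"
  shows "A *v (moore_penrose A *v y) = y"
  using assms moore_penrose_equations(1)[of A]
  by (auto simp: mat_range_def matrix_vector_mul_assoc)

lemma moore_penrose_mult_cancel_if_null_eq:
  fixes A :: "real^'n^'m" and U :: "real^'n^'k"
  assumes "mat_null A = mat_null U"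
  shows "moore_penrose A *v (A *v (moore_penrose U *v y)) = moore_penrose U *v y"
  using moore_penrose_proj_eq_if_null_eq[OF assms] moore_penrose_equations(2)[of U]
  by (simp add: matrix_vector_mul_assoc matrix_mul_assoc)

lemma nonneg_mat_mult_vec_nonneg:
  fixes B :: "real^'n^'m"
  assumes "nonneg_mat B" "nonneg_vec y"
  shows "nonneg_vec (B *v y)"
  using assms unfolding nonneg_mat_def nonneg_vec_def matrix_vector_mult_def
  by (simp add: sum_nonneg)

lemma nonneg_mat_mult_vec_mono:
  fixes B :: "real^'n^'m"
  assumes "nonneg_mat B" "\<And>j. y $ j \<le> z $ j"
  shows "(B *v y) $ i \<le> (B *v z) $ i"
  using assms unfolding nonneg_mat_def matrix_vector_mult_def
  by (auto intro!: sum_mono mult_left_mono)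

lemma nonneg_nonzero_vec_scale:
  "0 < c \<Longrightarrow> nonneg_vec x \<Longrightarrow> x \<noteq> 0 \<Longrightarrow> nonneg_vec (c *s x) \<and> c *s x \<noteq> 0"
  by (simp add: nonneg_vec_def)

lemma scale_pos_if_nonneg_moore_penrose:
  fixes A :: "real^'n^'m"
  assumes A: "nonneg_mat (moore_penrose A)" and x: "moore_penrose A *v (A *v x) = x"
    "nonneg_vec x" "x \<noteq> 0" and y: "A *v x = c *s y" "nonneg_vec y"
  shows "0 < c"
proof (rule ccontr)
  assume "\<not> 0 < c"
  have "x $ i = 0" for i
  proof -
    have "x $ i = c * (moore_penrose A *v y) $ i"
      using x(1) y(1) by (metis vector_scalar_commute vector_smult_component)
    also have "\<dots> \<le> 0"
      using \<open>\<not> 0 < c\<close> nonneg_mat_mult_vec_nonneg[OF A y(2)]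
      by (intro mult_nonpos_nonneg) (auto simp: nonneg_vec_def)
    finally show ?thesis
      using x(2) unfolding nonneg_vec_def by (metis order.antisym)
  qed
  with x(3) show False
    by (simp add: Finite_Cartesian_Product.vec_eq_iff)
qed

lemma proper_splitting_range_subset:
  assumes "proper_splitting A U V"
  shows "mat_range V \<subseteq> mat_range U"
proof
  fix z assume "z \<in> mat_range V"
  then obtain x where z: "z = V *v x"
    by (auto simp: mat_range_def)
  obtain x' where "A *v x = U *v x'"
    using assms unfolding proper_splitting_def mat_range_def by (metis rangeE rangeI)
  moreover have "V = U - A"
    using assms unfolding proper_splitting_def by simp
  ultimately have "z = U *v (x - x')"
    using z by (simp add: matrix_vector_mult_diff_rdistrib matrix_vector_mult_diff_distrib)
  thus "z \<in> mat_range U"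
    by (simp add: mat_range_def)
qed

lemma proper_splitting_mult_moore_penrose_eigenvector:
  assumes "proper_splitting A U V" "(V ** moore_penrose U) *v y = c *s y" "c \<noteq> 0"
  shows "U *v (moore_penrose U *v y) = y"
proof -
  have "V *v ((1 / c) *s (moore_penrose U *v y)) = (1 / c) *s ((V ** moore_penrose U) *v y)"
    by (simp add: vector_scalar_commute matrix_vector_mul_assoc)
  also have "\<dots> = y"
    using assms(2,3) by simp
  finally have "y \<in> mat_range V"
    unfolding mat_range_def by (metis rangeI)
  hence "y \<in> mat_range U"
    by (rule subsetD[OF proper_splitting_range_subset[OF assms(1)]])
  thus ?thesis
    by (rule mult_moore_penrose_range)
qed

section \<open>Eigenvalues and the spectral radius\<close>

definition cart_to_vec :: "(nat \<Rightarrow> 'k::finite) \<Rightarrow> 'a^'k \<Rightarrow> 'a vec" where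
  "cart_to_vec h v = Matrix.vec CARD('k) (\<lambda>i. v $ h i)"

definition cart_to_mat :: "(nat \<Rightarrow> 'k::finite) \<Rightarrow> 'a^'k^'k \<Rightarrow> 'a mat" where
  "cart_to_mat h M = Matrix.mat CARD('k) CARD('k) (\<lambda>(i, j). M $ h i $ h j)"

context
  fixes h :: "nat \<Rightarrow> 'k::finite"
  assumes h: "bij_betw h {0..<CARD('k)} UNIV"
begin

lemma cart_to_mat_mult_vec:
  fixes M :: "'a::comm_semiring_1^'k^'k"
  shows "cart_to_mat h M *\<^sub>v cart_to_vec h v = cart_to_vec h (M *v v)"
proof (rule eq_vecI)
  fix i assume "i < dim_vec (cart_to_vec h (M *v v))"
  hence i: "i < CARD('k)" by (simp add: cart_to_vec_def)
  have "(M *v v) $ h i = (\<Sum>j\<in>{0..<CARD('k)}. M $ h i $ h j * v $ h j)"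
    unfolding matrix_vector_mult_def using sum.reindex_bij_betw[OF h, of "\<lambda>k. M $ h i $ k * v $ k"]
    by simp
  thus "vec_index (cart_to_mat h M *\<^sub>v cart_to_vec h v) i = vec_index (cart_to_vec h (M *v v)) i"
    using i by (simp add: cart_to_mat_def cart_to_vec_def scalar_prod_def)
qed (simp add: cart_to_mat_def cart_to_vec_def)

lemma cart_to_vec_inj: "cart_to_vec h v = cart_to_vec h w \<longleftrightarrow> v = w"
proof
  assume eq: "cart_to_vec h v = cart_to_vec h w"
  show "v = w"
  proof (subst Finite_Cartesian_Product.vec_eq_iff, rule allI)
    fix k
    obtain i where "i < CARD('k)" "h i = k"
      using h unfolding bij_betw_def by (metis UNIV_I atLeastLessThan_iff imageE)
    thus "v $ k = w $ k"
      using arg_cong[OF eq, of "\<lambda>u. vec_index u i"] by (simp add: cart_to_vec_def)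
  qed
qed simp

lemma cart_to_vec_surj: "w \<in> carrier_vec CARD('k) \<Longrightarrow> \<exists>v. w = cart_to_vec h v"
  by (rule exI[of _ "\<chi> k. vec_index w (the_inv_into {0..<CARD('k)} h k)"])
    (use h in \<open>auto intro!: eq_vecI simp: cart_to_vec_def the_inv_into_f_f bij_betw_def\<close>)

lemma eigenvector_cart_to_mat_iff:
  fixes M :: "'a::field^'k^'k"
  shows "eigenvector (cart_to_mat h M) w z \<longleftrightarrow>
    (\<exists>v. w = cart_to_vec h v \<and> v \<noteq> 0 \<and> M *v v = z *s v)"
proof -
  have zero: "cart_to_vec h 0 = 0\<^sub>v CARD('k)" and smult: "cart_to_vec h (z *s v) = z \<cdot>\<^sub>v cart_to_vec h v"
    for v :: "'a^'k"
    by (auto intro!: eq_vecI simp: cart_to_vec_def)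
  have "eigenvector (cart_to_mat h M) (cart_to_vec h v) z \<longleftrightarrow>
      cart_to_vec h v \<noteq> cart_to_vec h 0 \<and> cart_to_vec h (M *v v) = cart_to_vec h (z *s v)" for v
    unfolding eigenvector_def zero smult cart_to_mat_mult_vec
    by (simp add: cart_to_mat_def cart_to_vec_def)
  hence "eigenvector (cart_to_mat h M) (cart_to_vec h v) z \<longleftrightarrow> v \<noteq> 0 \<and> M *v v = z *s v" for v
    by (simp only: cart_to_vec_inj)
  moreover have "w \<in> carrier_vec CARD('k)" if "eigenvector (cart_to_mat h M) w z"
    using that by (simp add: eigenvector_def cart_to_mat_def)
  ultimately show ?thesis
    using cart_to_vec_surj by blast
qed

lemma cart_eigenvalues_eq_spectrum:
  fixes M :: "'a::field^'k^'k"
  shows "{z. \<exists>v. v \<noteq> 0 \<and> M *v v = z *s v} = spectrum (cart_to_mat h M)"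
  unfolding spectrum_def eigenvalue_def eigenvector_cart_to_mat_iff by blast

end

lemma cart_eigenvalues_finite:
  fixes M :: "'a::field^'k^'k"
  shows "finite {z. \<exists>v. v \<noteq> 0 \<and> M *v v = z *s v}"
proof -
  obtain h :: "nat \<Rightarrow> 'k" where "bij_betw h {0..<CARD('k)} UNIV"
    using ex_bij_betw_nat_finite[of "UNIV :: 'k set"] by auto
  thus ?thesis
    by (simp add: cart_eigenvalues_eq_spectrum card_finite_spectrum(1)[of _ "CARD('k)"] cart_to_mat_def)
qed

lemma cart_eigenvalues_nonempty:
  fixes M :: "complex^'k^'k"
  shows "{z. \<exists>v. v \<noteq> 0 \<and> M *v v = z *s v} \<noteq> {}"
proof -
  obtain h :: "nat \<Rightarrow> 'k" where "bij_betw h {0..<CARD('k)} UNIV"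
    using ex_bij_betw_nat_finite[of "UNIV :: 'k set"] by auto
  thus ?thesis
    by (simp add: cart_eigenvalues_eq_spectrum spectrum_non_empty[of _ "CARD('k)"] cart_to_mat_def)
qed

lemma spectral_radius_eq_Max:
  fixes C :: "real^'n^'n"
  shows "spectral_radius C = Max (cmod ` {z. \<exists>v. v \<noteq> 0 \<and> complexify C *v v = z *s v})"
proof -
  have "{cmod z | z. \<exists>v. v \<noteq> 0 \<and> complexify C *v v = z *s v} =
      cmod ` {z. \<exists>v. v \<noteq> 0 \<and> complexify C *v v = z *s v}"
    by (rule setcompr_eq_image)
  thus ?thesis
    unfolding Defs.spectral_radius_def by simp
qed

lemma spectral_radius_attained:
  fixes C :: "real^'n^'n"
  obtains \<mu> u where "u \<noteq> 0" "complexify C *v u = \<mu> *s u" "cmod \<mu> = spectral_radius C"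
proof -
  let ?E = "{z. \<exists>v. v \<noteq> 0 \<and> complexify C *v v = z *s v}"
  have "spectral_radius C = Max (cmod ` ?E)"
    by (rule spectral_radius_eq_Max)
  also have "\<dots> \<in> cmod ` ?E"
    using cart_eigenvalues_finite cart_eigenvalues_nonempty by (intro Max_in) auto
  finally show ?thesis
    using that by auto
qed

lemma real_eigenvalue_abs_le_spectral_radius:
  fixes C :: "real^'n^'n"
  assumes "x \<noteq> 0" "C *v x = s *s x"
  shows "\<bar>s\<bar> \<le> spectral_radius C"
proof -
  let ?E = "{z. \<exists>v. v \<noteq> 0 \<and> complexify C *v v = z *s v}"
  define u where "u = (\<chi> i. complex_of_real (x $ i))"
  have "u \<noteq> 0"
    using assms(1) by (simp add: u_def Finite_Cartesian_Product.vec_eq_iff)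
  moreover have "complexify C *v u = complex_of_real s *s u"
    using arg_cong[OF assms(2), of "\<lambda>v. complex_of_real (v $ i)" for i]
    by (simp add: u_def complexify_def matrix_vector_mult_def Finite_Cartesian_Product.vec_eq_iff)
  ultimately have "cmod (complex_of_real s) \<in> cmod ` ?E"
    by blast
  hence "cmod (complex_of_real s) \<le> Max (cmod ` ?E)"
    using cart_eigenvalues_finite by (intro Max_ge) auto
  thus ?thesis
    by (simp add: spectral_radius_eq_Max)
qed

section \<open>A Perron-Frobenius argument via Brouwer's fixed point theorem\<close>

definition subinvariant_simplex :: "real^'k^'k \<Rightarrow> real \<Rightarrow> (real^'k) set" where
  "subinvariant_simplex B r =
    {y. (\<forall>i. 0 \<le> y $ i) \<and> (\<Sum>i\<in>UNIV. y $ i) = 1 \<and> (\<forall>i. r * y $ i \<le> (B *v y) $ i)}"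

lemma compact_subinvariant_simplex:
  fixes B :: "real^'k^'k"
  shows "compact (subinvariant_simplex B r)"
proof -
  have "closed (subinvariant_simplex B r)"
    unfolding subinvariant_simplex_def matrix_vector_mult_def vec_lambda_beta
    by (intro closed_Collect_conj closed_Collect_all closed_Collect_le closed_Collect_eq continuous_intros)
  moreover have "subinvariant_simplex B r \<subseteq> cbox 0 1"
  proof
    fix y assume y: "y \<in> subinvariant_simplex B r"
    have "y $ i \<le> (\<Sum>j\<in>UNIV. y $ j)" for i
      using y by (intro member_le_sum) (auto simp: subinvariant_simplex_def)
    thus "y \<in> cbox 0 1"
      using y by (simp add: mem_box_cart subinvariant_simplex_def)
  qed
  ultimately show ?thesis
    by (metis bounded_cbox bounded_subset compact_eq_bounded_closed)
qed

lemma convex_subinvariant_simplex: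
  fixes B :: "real^'k^'k"
  shows "convex (subinvariant_simplex B r)"
  unfolding convex_def
proof (intro ballI allI impI)
  fix x y :: "real^'k" and u v :: real
  assume x: "x \<in> subinvariant_simplex B r" and y: "y \<in> subinvariant_simplex B r"
    and uv: "0 \<le> u" "0 \<le> v" "u + v = 1"
  have "r * (u *\<^sub>R x + v *\<^sub>R y) $ i \<le> (B *v (u *\<^sub>R x + v *\<^sub>R y)) $ i" for i
  proof -
    have "r * (u *\<^sub>R x + v *\<^sub>R y) $ i = u * (r * x $ i) + v * (r * y $ i)"
      by (simp add: algebra_simps)
    also have "\<dots> \<le> u * (B *v x) $ i + v * (B *v y) $ i"
      using x y uv unfolding subinvariant_simplex_def by (intro add_mono mult_left_mono) auto
    also have "\<dots> = (B *v (u *\<^sub>R x + v *\<^sub>R y)) $ i"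
      by (simp add: matrix_vector_right_distrib matrix_vector_mult_scaleR)
    finally show ?thesis .
  qed
  moreover have "(\<Sum>i\<in>UNIV. (u *\<^sub>R x + v *\<^sub>R y) $ i) = 1"
    using x y uv unfolding subinvariant_simplex_def by (simp add: sum.distrib flip: sum_distrib_left)
  ultimately show "u *\<^sub>R x + v *\<^sub>R y \<in> subinvariant_simplex B r"
    using x y uv unfolding subinvariant_simplex_def by simp
qed

lemma normalize_mem_subinvariant_simplex:
  fixes B :: "real^'k^'k"
  assumes "nonneg_vec v" "0 < (\<Sum>i\<in>UNIV. v $ i)" "\<And>i. r * v $ i \<le> (B *v v) $ i"
  shows "(1 / (\<Sum>i\<in>UNIV. v $ i)) *\<^sub>R v \<in> subinvariant_simplex B r"
proof -
  let ?c = "1 / (\<Sum>i\<in>UNIV. v $ i)"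
  have "r * (?c *\<^sub>R v) $ i \<le> (B *v (?c *\<^sub>R v)) $ i" for i
    using mult_left_mono[OF assms(3)[of i], of ?c] assms(2)
    by (simp add: matrix_vector_mult_scaleR algebra_simps)
  moreover have "(\<Sum>i\<in>UNIV. (?c *\<^sub>R v) $ i) = 1"
    using assms(2) by (simp flip: sum_divide_distrib)
  ultimately show ?thesis
    using assms(1,2) unfolding subinvariant_simplex_def nonneg_vec_def by simp
qed

lemma subinvariant_simplex_mult_sum_ge:
  fixes B :: "real^'k^'k"
  assumes "y \<in> subinvariant_simplex B r"
  shows "r \<le> (\<Sum>i\<in>UNIV. (B *v y) $ i)"
proof -
  have "r = (\<Sum>i\<in>UNIV. r * y $ i)"
    using assms by (simp add: subinvariant_simplex_def flip: sum_distrib_left)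
  also have "\<dots> \<le> (\<Sum>i\<in>UNIV. (B *v y) $ i)"
    using assms by (intro sum_mono) (simp add: subinvariant_simplex_def)
  finally show ?thesis .
qed

lemma normalized_mult_mem_subinvariant_simplex:
  fixes B :: "real^'k^'k"
  assumes B: "nonneg_mat B" and r: "0 < r" and y: "y \<in> subinvariant_simplex B r"
  shows "(1 / (\<Sum>i\<in>UNIV. (B *v y) $ i)) *\<^sub>R (B *v y) \<in> subinvariant_simplex B r"
proof (rule normalize_mem_subinvariant_simplex)
  show "nonneg_vec (B *v y)"
    using y by (intro nonneg_mat_mult_vec_nonneg[OF B]) (simp add: subinvariant_simplex_def nonneg_vec_def)
  show "0 < (\<Sum>i\<in>UNIV. (B *v y) $ i)"
    using subinvariant_simplex_mult_sum_ge[OF y] r by simp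
  show "r * (B *v y) $ i \<le> (B *v (B *v y)) $ i" for i
  proof -
    have "r * (B *v y) $ i = (B *v (r *s y)) $ i"
      by (simp add: vector_scalar_commute)
    also have "\<dots> \<le> (B *v (B *v y)) $ i"
      using y by (intro nonneg_mat_mult_vec_mono[OF B]) (simp add: subinvariant_simplex_def)
    finally show ?thesis .
  qed
qed

lemma nonneg_mat_eigenvector_ge:
  fixes B :: "real^'k^'k"
  assumes B: "nonneg_mat B" and r: "0 < r"
    and w: "nonneg_vec w" "w \<noteq> 0" "\<And>i. r * w $ i \<le> (B *v w) $ i"
  obtains y s where "nonneg_vec y" "y \<noteq> 0" "B *v y = s *s y" "r \<le> s"
proof -
  let ?S = "subinvariant_simplex B r"
  let ?\<sigma> = "\<lambda>v::real^'k. \<Sum>i\<in>UNIV. v $ i"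
  define f where "f y = (1 / ?\<sigma> (B *v y)) *\<^sub>R (B *v y)" for y
  have "?S \<noteq> {}"
  proof -
    obtain k where "w $ k \<noteq> 0"
      using w(2) by (metis Finite_Cartesian_Product.vec_eq_iff zero_index)
    hence "0 < ?\<sigma> w"
      using w(1) unfolding nonneg_vec_def by (intro sum_pos2[of _ k]) (auto simp: order_less_le)
    thus ?thesis
      using normalize_mem_subinvariant_simplex[OF w(1) _ w(3)] by blast
  qed
  moreover have "f \<in> ?S \<rightarrow> ?S"
    unfolding f_def using normalized_mult_mem_subinvariant_simplex[OF B r] by blast
  moreover have "continuous_on ?S f"
    unfolding f_def using subinvariant_simplex_mult_sum_ge r
    by (intro continuous_intros) force
  ultimately obtain y where y: "y \<in> ?S" and fixed: "f y = y"
    using brouwer[OF compact_subinvariant_simplex convex_subinvariant_simplex] by blast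
  define s where "s = ?\<sigma> (B *v y)"
  have "r \<le> s"
    unfolding s_def by (rule subinvariant_simplex_mult_sum_ge[OF y])
  moreover have "B *v y = s *s y"
  proof -
    have "s *\<^sub>R y = (s * (1 / s)) *\<^sub>R (B *v y)"
      using fixed unfolding f_def s_def by (metis scaleR_scaleR)
    thus ?thesis
      using \<open>r \<le> s\<close> r by (simp add: scalar_mult_eq_scaleR)
  qed
  moreover have "nonneg_vec y" "y \<noteq> 0"
    using y by (auto simp: subinvariant_simplex_def nonneg_vec_def)
  ultimately show ?thesis
    using that by blast
qed

lemma complexify_mult: "complexify (X ** Y) = complexify X ** complexify Y"
  unfolding complexify_def matrix_matrix_mult_def
  by (simp add: Finite_Cartesian_Product.vec_eq_iff)

lemma eigenvector_mult_swap:
  fixes X :: "'a::field^'m^'n" and Y :: "'a^'n^'m"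
  assumes eig: "(X ** Y) *v u = \<mu> *s u" and "\<mu> \<noteq> 0" "u \<noteq> 0"
  shows "Y *v u \<noteq> 0" "(Y ** X) *v (Y *v u) = \<mu> *s (Y *v u)"
proof -
  have XYu: "X *v (Y *v u) = \<mu> *s u"
    using eig by (simp add: matrix_vector_mul_assoc)
  thus "Y *v u \<noteq> 0"
    using assms(2,3) by auto
  show "(Y ** X) *v (Y *v u) = \<mu> *s (Y *v u)"
    by (simp add: matrix_vector_mul_assoc[symmetric] XYu vector_scalar_commute)
qed

lemma nonneg_mat_abs_eigenvector_subinvariant:
  fixes B :: "real^'k^'k"
  assumes "nonneg_mat B" "complexify B *v z = \<mu> *s z"
  shows "cmod \<mu> * cmod (z $ i) \<le> (B *v (\<chi> j. cmod (z $ j))) $ i"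
proof -
  have "cmod \<mu> * cmod (z $ i) = cmod ((complexify B *v z) $ i)"
    using assms(2) by (simp add: norm_mult)
  also have "\<dots> = cmod (\<Sum>j\<in>UNIV. complex_of_real (B $ i $ j) * z $ j)"
    unfolding complexify_def matrix_vector_mult_def by simp
  also have "\<dots> \<le> (\<Sum>j\<in>UNIV. cmod (complex_of_real (B $ i $ j) * z $ j))"
    by (rule norm_sum)
  also have "\<dots> = (B *v (\<chi> j. cmod (z $ j))) $ i"
    using assms(1) unfolding matrix_vector_mult_def nonneg_mat_def by (simp add: norm_mult)
  finally show ?thesis .
qed

lemma mult_nonneg_eigenvector_spectral_radius:
  fixes X :: "real^'m^'n" and Y :: "real^'n^'m"
  assumes YX: "nonneg_mat (Y ** X)" and pos: "0 < spectral_radius (X ** Y)"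
  obtains y where "nonneg_vec y" "y \<noteq> 0" "(Y ** X) *v y = spectral_radius (X ** Y) *s y"
proof -
  let ?\<rho> = "spectral_radius (X ** Y)"
  obtain \<mu> u where u: "u \<noteq> 0" "complexify (X ** Y) *v u = \<mu> *s u" and \<mu>: "cmod \<mu> = ?\<rho>"
    by (rule spectral_radius_attained)
  define z where "z = complexify Y *v u"
  have "\<mu> \<noteq> 0"
    using \<mu> pos by auto
  hence z: "z \<noteq> 0" "complexify (Y ** X) *v z = \<mu> *s z"
    using eigenvector_mult_swap[of "complexify X" "complexify Y" u \<mu>] u
    by (simp_all add: z_def complexify_mult)
  define w where "w = (\<chi> j. cmod (z $ j))"
  have "nonneg_vec w" "w \<noteq> 0"
    using z(1) by (auto simp: w_def nonneg_vec_def Finite_Cartesian_Product.vec_eq_iff)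
  moreover have "?\<rho> * w $ i \<le> ((Y ** X) *v w) $ i" for i
    using nonneg_mat_abs_eigenvector_subinvariant[OF YX z(2)] \<mu> by (simp add: w_def)
  ultimately obtain y s where y: "nonneg_vec y" "y \<noteq> 0" and eig: "(Y ** X) *v y = s *s y"
    and "?\<rho> \<le> s"
    using nonneg_mat_eigenvector_ge[OF YX pos] by blast
  have "X *v y \<noteq> 0" "(X ** Y) *v (X *v y) = s *s (X *v y)"
    using eigenvector_mult_swap[OF eig] y(2) \<open>?\<rho> \<le> s\<close> pos by auto
  hence "s \<le> ?\<rho>"
    using real_eigenvalue_abs_le_spectral_radius by fastforce
  with \<open>?\<rho> \<le> s\<close> eig y show ?thesis
    using that by auto
qed

theorem lemma3p10:
  fixes A U V :: "real^'n^'m"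
  assumes "nonneg_mat (moore_penrose A)"
    and "proper_weak_regular_II A U V"
    and "spectral_radius (moore_penrose U ** V) > 0"
  shows "\<exists>x :: real^'n. nonneg_vec x \<and> x \<noteq> 0 \<and>
           (moore_penrose U ** V) *v x = spectral_radius (moore_penrose U ** V) *s x \<and>
           nonneg_vec (A *v x) \<and> A *v x \<noteq> 0 \<and>
           nonneg_vec (V *v x) \<and> V *v x \<noteq> 0"
proof -
  let ?\<rho> = "spectral_radius (moore_penrose U ** V)"
  have split: "proper_splitting A U V" and U'_nonneg: "nonneg_mat (moore_penrose U)"
    and VU'_nonneg: "nonneg_mat (V ** moore_penrose U)"
    using assms(2) unfolding proper_weak_regular_II_def by auto
  hence A_eq: "A = U - V" and null_eq: "mat_null A = mat_null U"
    unfolding proper_splitting_def by auto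
  obtain y where y: "nonneg_vec y" "y \<noteq> 0" and eig: "(V ** moore_penrose U) *v y = ?\<rho> *s y"
    by (rule mult_nonneg_eigenvector_spectral_radius[OF VU'_nonneg assms(3)])
  define x where "x = moore_penrose U *v y"
  have Vx: "V *v x = ?\<rho> *s y"
    using eig by (simp add: x_def matrix_vector_mul_assoc)
  have x: "nonneg_vec x" "x \<noteq> 0"
    using Vx y assms(3) nonneg_mat_mult_vec_nonneg[OF U'_nonneg] by (auto simp: x_def)
  have "U *v x = y"
    unfolding x_def using assms(3)
    by (intro proper_splitting_mult_moore_penrose_eigenvector[OF split eig]) simp
  hence Ax: "A *v x = (1 - ?\<rho>) *s y"
    using Vx unfolding A_eq matrix_vector_mult_diff_rdistrib
    by (simp add: Finite_Cartesian_Product.vec_eq_iff algebra_simps)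
  have "moore_penrose A *v (A *v x) = x"
    unfolding x_def by (rule moore_penrose_mult_cancel_if_null_eq[OF null_eq])
  hence "0 < 1 - ?\<rho>"
    by (rule scale_pos_if_nonneg_moore_penrose[OF assms(1) _ x Ax y(1)])
  hence "nonneg_vec (A *v x) \<and> A *v x \<noteq> 0"
    unfolding Ax using y by (rule nonneg_nonzero_vec_scale)
  moreover have "nonneg_vec (V *v x) \<and> V *v x \<noteq> 0"
    unfolding Vx using assms(3) y by (rule nonneg_nonzero_vec_scale)
  moreover have "(moore_penrose U ** V) *v x = ?\<rho> *s x"
    unfolding matrix_vector_mul_assoc[symmetric] Vx by (simp add: x_def vector_scalar_commute)
  ultimately show ?thesis
    using x by blast
qed

end
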